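(* Let $d\ge2$, $n\ge1$, let $H$ be a Hermitian operator on $(\mathbb{C}^d)^{\otimes n}$ acting nontrivially only on a $k$-qudit subsystem (i.e. $H=H_S\otimes I_{S^c}$ with $|S|=k$), and let $O$ be a linear operator with $\|O\|_2=1$. Then $$|R_I(H,O)|\le 4k\|H\|_\infty.$$
   Context: Let $V=\mathbb{Z}_d\times\mathbb{Z}_d$; for $a=(s,t)\in V$, $P_a=X^sZ^t$ with $X|j\rangle=|j+1\bmod d\rangle$, $Z|j\rangle=e^{2\pi ij/d}|j\rangle$; $P_{\vec a}=\bigotimes_iP_{a_i}$ and $|\vec a|=\#\{i:a_i\ne(0,0)\}$. $\|A\|_2=(d^{-n}\mathrm{Tr}(A^\dagger A))^{1/2}$. For $\|O\|_2=1$, $P_O[\vec a]=d^{-2n}|\mathrm{Tr}(OP_{\vec a})|^2$ and $I[O]=\sum_{\vec a}|\vec a|P_O[\vec a]$. The influence rate is $R_I(H,O)=\frac{d}{dt}I[U_tOU_t^\dagger]\big|_{t=0}$ with $U_t=e^{-itH}$. $\|\cdot\|_\infty$ is the operator norm. *)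

theory Defs
  imports "HOL-Analysis.Analysis" "HOL-Library.FuncSet"
begin

text \<open>Operators on (C^d)^{\<otimes>n} are represented by their matrices in the computational
  basis. A basis state is a function x with x i < d for i < n (extensional: x i = undefined
  for i >= n). Operator entries outside the basis are irrelevant.\<close>

type_synonym qop = "(nat \<Rightarrow> nat) \<Rightarrow> (nat \<Rightarrow> nat) \<Rightarrow> complex"

definition qbasis :: "nat \<Rightarrow> nat \<Rightarrow> (nat \<Rightarrow> nat) set" where
  "qbasis d n = PiE {..<n} (\<lambda>_. {..<d})"

definition qmult :: "nat \<Rightarrow> nat \<Rightarrow> qop \<Rightarrow> qop \<Rightarrow> qop" where
  "qmult d n A B = (\<lambda>x y. \<Sum>z\<in>qbasis d n. A x z * B z y)"

definition qadj :: "qop \<Rightarrow> qop" where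
  "qadj A = (\<lambda>x y. cnj (A y x))"

definition qid :: qop where
  "qid = (\<lambda>x y. if x = y then 1 else 0)"

definition qtrace :: "nat \<Rightarrow> nat \<Rightarrow> qop \<Rightarrow> complex" where
  "qtrace d n A = (\<Sum>x\<in>qbasis d n. A x x)"

fun qpow :: "nat \<Rightarrow> nat \<Rightarrow> qop \<Rightarrow> nat \<Rightarrow> qop" where
  "qpow d n A 0 = qid"
| "qpow d n A (Suc k) = qmult d n A (qpow d n A k)"

definition qexp :: "nat \<Rightarrow> nat \<Rightarrow> qop \<Rightarrow> qop" where
  "qexp d n A = (\<lambda>x y. \<Sum>k. qpow d n A k x y / of_nat (fact k))"

definition qevol :: "nat \<Rightarrow> nat \<Rightarrow> qop \<Rightarrow> real \<Rightarrow> qop" where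
  "qevol d n H t = qexp d n (\<lambda>x y. - (\<i> * of_real t) * H x y)"

definition hs_norm :: "nat \<Rightarrow> nat \<Rightarrow> qop \<Rightarrow> real" where
  "hs_norm d n A = sqrt (Re (qtrace d n (qmult d n (qadj A) A)) / real d ^ n)"

definition op_norm :: "nat \<Rightarrow> nat \<Rightarrow> qop \<Rightarrow> real" where
  "op_norm d n A = Sup {sqrt (\<Sum>x\<in>qbasis d n. (cmod (\<Sum>y\<in>qbasis d n. A x y * v y))\<^sup>2) | v.
      (\<Sum>y\<in>qbasis d n. (cmod (v y))\<^sup>2) = 1}"

definition hermitian_op :: "nat \<Rightarrow> nat \<Rightarrow> qop \<Rightarrow> bool" where
  "hermitian_op d n H \<longleftrightarrow> (\<forall>x\<in>qbasis d n. \<forall>y\<in>qbasis d n. H x y = cnj (H y x))"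

text \<open>H = H_S \<otimes> I_{S^c}: the matrix entry depends only on the S-components, times
  the identity on the complement.\<close>
definition acts_on :: "nat \<Rightarrow> nat \<Rightarrow> nat set \<Rightarrow> qop \<Rightarrow> bool" where
  "acts_on d n S H \<longleftrightarrow> (\<exists>h :: (nat \<Rightarrow> nat) \<Rightarrow> (nat \<Rightarrow> nat) \<Rightarrow> complex.
     \<forall>x\<in>qbasis d n. \<forall>y\<in>qbasis d n.
       H x y = h (restrict x S) (restrict y S) *
               (if (\<forall>i\<in>{..<n} - S. x i = y i) then 1 else 0))"

text \<open>Single-qudit Weyl operator P_(s,t) = X^s Z^t: <i|X^s Z^t|j> = w^{tj} [i = j+s mod d].\<close>
definition pauli1 :: "nat \<Rightarrow> nat \<times> nat \<Rightarrow> nat \<Rightarrow> nat \<Rightarrow> complex" where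
  "pauli1 d a i j = (if i = (j + fst a) mod d
                     then cis (2 * pi * real (snd a) * real j / real d) else 0)"

definition pauli :: "nat \<Rightarrow> nat \<Rightarrow> (nat \<Rightarrow> nat \<times> nat) \<Rightarrow> qop" where
  "pauli d n a = (\<lambda>x y. \<Prod>i<n. pauli1 d (a i) (x i) (y i))"

definition pauli_idx :: "nat \<Rightarrow> nat \<Rightarrow> (nat \<Rightarrow> nat \<times> nat) set" where
  "pauli_idx d n = PiE {..<n} (\<lambda>_. {..<d} \<times> {..<d})"

definition pweight :: "nat \<Rightarrow> (nat \<Rightarrow> nat \<times> nat) \<Rightarrow> nat" where
  "pweight n a = card {i\<in>{..<n}. a i \<noteq> (0, 0)}"

definition pauli_weight_dist :: "nat \<Rightarrow> nat \<Rightarrow> qop \<Rightarrow> (nat \<Rightarrow> nat \<times> nat) \<Rightarrow> real" where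
  "pauli_weight_dist d n Op a = (cmod (qtrace d n (qmult d n Op (pauli d n a))))\<^sup>2 / real d ^ (2 * n)"

definition influence :: "nat \<Rightarrow> nat \<Rightarrow> qop \<Rightarrow> real" where
  "influence d n Op = (\<Sum>a\<in>pauli_idx d n. real (pweight n a) * pauli_weight_dist d n Op a)"

definition influence_rate :: "nat \<Rightarrow> nat \<Rightarrow> qop \<Rightarrow> qop \<Rightarrow> real" where
  "influence_rate d n H Op = deriv (\<lambda>t. influence d n
      (qmult d n (qmult d n (qevol d n H t) Op) (qadj (qevol d n H t)))) 0"

end

theory Submission
  imports Defs
begin

(* The Heisenberg derivative of O(t) = U_t O U_t^* at t = 0 is O' = -i[H,O], so the influence rate is
   d^(-2n) * sum_a |a| * 2 Re (conj c_a * c'_a), where c_a and c'_a are the Weyl coefficients Tr(O P_a)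
   and Tr(O' P_a). Writing |a| as the number of qudits j with a_j <> 0 splits the rate into one
   contribution per qudit, namely the sum over the a with a_j <> 0. This is the sum over all a minus the
   sum over the a with a_j = 0. By Parseval's identity for the Weyl basis these two sums are
   d^n <O, -i[H,O]> and d^(n-1) <Tr_j O, -i[H, Tr_j O]>, the latter because H commutes with the
   partial trace over a qudit j outside S. Both inner products are purely imaginary since H is
   Hermitian, so qudits outside S contribute nothing. Every other contribution is at most
   2 d^(-2n) sum_a |c_a| (|Tr(HO P_a)| + |Tr(OH P_a)|), which Cauchy-Schwarz and Parseval bound by
   2 ||O||_2 (||HO||_2 + ||OH||_2) <= 4 ||H||. *)

lemma finite_qbasis [simp]: "finite (qbasis d n)"
  by (simp add: qbasis_def finite_PiE)

lemma qbasis_nonempty: "0 < d \<Longrightarrow> qbasis d n \<noteq> {}"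
  by (auto simp: qbasis_def PiE_eq_empty_iff)

lemma qbasis_eq_iff:
  assumes "x \<in> qbasis d n" "y \<in> qbasis d n"
  shows "x = y \<longleftrightarrow> (\<forall>i<n. x i = y i)"
  using assms unfolding qbasis_def by (auto intro: PiE_ext)

lemma qbasis_less: "x \<in> qbasis d n \<Longrightarrow> i < n \<Longrightarrow> x i < d"
  unfolding qbasis_def by (auto dest: PiE_mem)

lemma fun_upd_in_qbasis:
  assumes "x \<in> qbasis d n" "j < n" "c < d"
  shows "x(j := c) \<in> qbasis d n"
  using assms unfolding qbasis_def by (auto simp: PiE_iff extensional_def)

lemma cnj_mult_self: "cnj z * z = complex_of_real ((cmod z)\<^sup>2)"
  by (metis complex_norm_square mult.commute)

section \<open>The derivative of the influence\<close>

lemma qpow_scale: "qpow d n (\<lambda>x y. c * A x y) k = (\<lambda>x y. c ^ k * qpow d n A k x y)"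
  by (induction k) (simp_all add: qid_def qmult_def sum_distrib_left mult_ac)

lemma norm_qpow_le:
  assumes "x \<in> qbasis d n"
  shows "cmod (qpow d n A k x y) \<le> (\<Sum>u\<in>qbasis d n. \<Sum>v\<in>qbasis d n. cmod (A u v)) ^ k"
  using assms
proof (induction k arbitrary: x)
  case 0
  then show ?case by (simp add: qid_def)
next
  case (Suc k)
  define C where "C = (\<Sum>u\<in>qbasis d n. \<Sum>v\<in>qbasis d n. cmod (A u v))"
  have "0 \<le> C"
    unfolding C_def by (intro sum_nonneg) auto
  have row_le: "(\<Sum>v\<in>qbasis d n. cmod (A x v)) \<le> C"
    unfolding C_def using Suc.prems by (intro member_le_sum) (auto intro: sum_nonneg)
  have "cmod (qpow d n A (Suc k) x y) \<le> (\<Sum>z\<in>qbasis d n. cmod (A x z) * cmod (qpow d n A k z y))"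
    unfolding qpow.simps qmult_def by (rule order_trans[OF norm_sum]) (simp add: norm_mult)
  also have "\<dots> \<le> (\<Sum>z\<in>qbasis d n. cmod (A x z) * C ^ k)"
    using Suc.IH unfolding C_def by (intro sum_mono mult_left_mono) auto
  also have "\<dots> \<le> C * C ^ k"
    unfolding sum_distrib_right[symmetric] using row_le \<open>0 \<le> C\<close> by (intro mult_right_mono) auto
  finally show ?case unfolding C_def by simp
qed

definition qevol_coeff :: "nat \<Rightarrow> nat \<Rightarrow> qop \<Rightarrow> (nat \<Rightarrow> nat) \<Rightarrow> (nat \<Rightarrow> nat) \<Rightarrow> nat \<Rightarrow> complex"
  where "qevol_coeff d n H x y k = (- \<i>) ^ k * qpow d n H k x y / fact k"

lemma qevol_powser: "qevol d n H t x y = (\<Sum>k. qevol_coeff d n H x y k * of_real t ^ k)"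
proof -
  have "(- (\<i> * of_real t)) ^ k = (- \<i>) ^ k * of_real t ^ k" for k
    by (metis minus_mult_left power_mult_distrib)
  then have "qpow d n (\<lambda>x y. - (\<i> * of_real t) * H x y) k x y / fact k
      = qevol_coeff d n H x y k * of_real t ^ k" for k
    by (subst qpow_scale) (simp add: qevol_coeff_def)
  then show ?thesis
    unfolding qevol_def qexp_def by simp
qed

lemma summable_qevol_coeff:
  assumes "x \<in> qbasis d n"
  shows "summable (\<lambda>k. qevol_coeff d n H x y k * z ^ k)"
proof (rule summable_comparison_test')
  define C where "C = (\<Sum>u\<in>qbasis d n. \<Sum>v\<in>qbasis d n. cmod (H u v))"
  show "summable (\<lambda>k. (C * cmod z) ^ k / fact k)"
    using summable_exp[of "C * cmod z"] by (simp add: divide_inverse mult.commute)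
  show "norm (qevol_coeff d n H x y k * z ^ k) \<le> (C * cmod z) ^ k / fact k" for k
    using norm_qpow_le[OF assms, of H k y] unfolding C_def
    by (simp add: qevol_coeff_def norm_mult norm_divide norm_power power_mult_distrib
                  divide_right_mono mult_right_mono)
qed

lemma qevol_0: "qevol d n H 0 = qid"
  unfolding fun_eq_iff qevol_powser of_real_0 powser_zero by (simp add: qevol_coeff_def)

lemma qevol_has_vector_derivative:
  assumes "x \<in> qbasis d n" "y \<in> qbasis d n"
  shows "((\<lambda>t. qevol d n H t x y) has_vector_derivative (- \<i> * H x y)) (at 0)"
proof -
  have "((\<lambda>z. \<Sum>k. qevol_coeff d n H x y k * z ^ k) has_field_derivative
          (\<Sum>k. diffs (qevol_coeff d n H x y) k * 0 ^ k)) (at 0)"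
    using termdiffs_strong_converges_everywhere summable_qevol_coeff[OF assms(1)] by blast
  moreover have "(\<Sum>k. diffs (qevol_coeff d n H x y) k * 0 ^ k) = - \<i> * H x y"
    using assms(2)
    by (simp only: powser_zero) (simp add: diffs_def qevol_coeff_def qmult_def qid_def if_distrib cong: if_cong)
  ultimately show ?thesis
    unfolding qevol_powser using has_vector_derivative_real_field[of _ _ 0] by fastforce
qed

lemma qmult_has_vector_derivative:
  assumes "\<And>x y. x \<in> qbasis d n \<Longrightarrow> y \<in> qbasis d n \<Longrightarrow> ((\<lambda>t. A t x y) has_vector_derivative A' x y) (at t0)"
    and "\<And>x y. x \<in> qbasis d n \<Longrightarrow> y \<in> qbasis d n \<Longrightarrow> ((\<lambda>t. B t x y) has_vector_derivative B' x y) (at t0)"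
    and "x \<in> qbasis d n" "y \<in> qbasis d n"
  shows "((\<lambda>t. qmult d n (A t) (B t) x y) has_vector_derivative
           qmult d n (A t0) B' x y + qmult d n A' (B t0) x y) (at t0)"
  unfolding qmult_def sum.distrib[symmetric]
  by (intro has_vector_derivative_sum has_vector_derivative_mult) (use assms in auto)

lemma qmult_const_right_has_vector_derivative:
  assumes "\<And>z. z \<in> qbasis d n \<Longrightarrow> ((\<lambda>t. A t x z) has_vector_derivative A' x z) (at t0)"
  shows "((\<lambda>t. qmult d n (A t) B x y) has_vector_derivative qmult d n A' B x y) (at t0)"
  unfolding qmult_def by (intro has_vector_derivative_sum has_vector_derivative_mult_left assms)

lemma qadj_has_vector_derivative:
  assumes "((\<lambda>t. A t y x) has_vector_derivative A' y x) (at t0)"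
  shows "((\<lambda>t. qadj (A t) x y) has_vector_derivative qadj A' x y) (at t0)"
  unfolding qadj_def by (rule has_vector_derivative_cnj[OF assms])

abbreviation heisenberg :: "nat \<Rightarrow> nat \<Rightarrow> qop \<Rightarrow> qop \<Rightarrow> real \<Rightarrow> qop" where
  "heisenberg d n H Op t \<equiv> qmult d n (qmult d n (qevol d n H t) Op) (qadj (qevol d n H t))"

definition heisenberg_deriv :: "nat \<Rightarrow> nat \<Rightarrow> qop \<Rightarrow> qop \<Rightarrow> qop" where
  "heisenberg_deriv d n H Op = (\<lambda>x y. - \<i> * (qmult d n H Op x y - qmult d n Op H x y))"

lemma qmult_qid_left: "x \<in> qbasis d n \<Longrightarrow> qmult d n qid A x y = A x y"
  by (simp add: qmult_def qid_def if_distrib[of "\<lambda>u. u * _"] cong: if_cong)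

lemma qmult_qid_right: "y \<in> qbasis d n \<Longrightarrow> qmult d n A qid x y = A x y"
  by (simp add: qmult_def qid_def if_distrib[of "\<lambda>u. _ * u"] cong: if_cong)

lemma qadj_qid [simp]: "qadj qid = qid"
  by (auto simp: qadj_def qid_def fun_eq_iff)

lemma heisenberg_0: "x \<in> qbasis d n \<Longrightarrow> y \<in> qbasis d n \<Longrightarrow> heisenberg d n H Op 0 x y = Op x y"
  by (simp add: qevol_0 qmult_qid_left qmult_qid_right)

lemma heisenberg_has_vector_derivative:
  assumes herm: "hermitian_op d n H" and xy: "x \<in> qbasis d n" "y \<in> qbasis d n"
  shows "((\<lambda>t. heisenberg d n H Op t x y) has_vector_derivative heisenberg_deriv d n H Op x y) (at 0)"
proof -
  let ?U = "qevol d n H" and ?B = "qbasis d n" and ?H' = "\<lambda>x y. - \<i> * H x y"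
  have U: "((\<lambda>t. ?U t x y) has_vector_derivative ?H' x y) (at 0)" if "x \<in> ?B" "y \<in> ?B" for x y
    using qevol_has_vector_derivative that .
  have UO: "((\<lambda>t. qmult d n (?U t) Op x y) has_vector_derivative qmult d n ?H' Op x y) (at 0)"
    if "x \<in> ?B" "y \<in> ?B" for x y
    using qmult_const_right_has_vector_derivative[where d=d and n=n and A="?U" and A'="?H'", OF U[OF that(1)]] .
  have UH: "((\<lambda>t. qadj (?U t) x y) has_vector_derivative qadj ?H' x y) (at 0)" if "x \<in> ?B" "y \<in> ?B" for x y
    using qadj_has_vector_derivative[where A="?U" and A'="?H'", OF U[OF that(2,1)]] .
  have "((\<lambda>t. heisenberg d n H Op t x y) has_vector_derivative
      qmult d n (qmult d n qid Op) (qadj ?H') x y + qmult d n (qmult d n ?H' Op) qid x y) (at 0)"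
    using qmult_has_vector_derivative[where d=d and n=n, OF UO UH xy] unfolding qevol_0 qadj_qid .
  moreover have "qmult d n (qmult d n qid Op) (qadj ?H') x y = \<i> * qmult d n Op H x y"
  proof -
    have "qadj ?H' w y = \<i> * H w y" if "w \<in> ?B" for w
    proof -
      have "H y w = cnj (H w y)"
        using herm that xy(2) unfolding hermitian_op_def by blast
      then show ?thesis by (simp add: qadj_def)
    qed
    then have "qmult d n (qmult d n qid Op) (qadj ?H') x y = (\<Sum>w\<in>?B. Op x w * (\<i> * H w y))"
      unfolding qmult_def[of d n "qmult d n qid Op"]
      by (intro sum.cong refl) (simp add: qmult_qid_left[OF xy(1)])
    then show ?thesis
      by (simp add: qmult_def sum_distrib_left mult_ac)
  qed
  moreover have "qmult d n (qmult d n ?H' Op) qid x y = - \<i> * qmult d n H Op x y"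
    unfolding qmult_qid_right[OF xy(2)] by (simp add: qmult_def sum_distrib_left mult_ac)
  ultimately show ?thesis
    by (simp add: heisenberg_deriv_def algebra_simps)
qed

definition pauli_coeff :: "nat \<Rightarrow> nat \<Rightarrow> qop \<Rightarrow> (nat \<Rightarrow> nat \<times> nat) \<Rightarrow> complex" where
  "pauli_coeff d n A a = qtrace d n (qmult d n A (pauli d n a))"

lemma pauli_coeff_eq: "pauli_coeff d n A a = (\<Sum>x\<in>qbasis d n. \<Sum>z\<in>qbasis d n. A x z * pauli d n a z x)"
  by (simp add: pauli_coeff_def qtrace_def qmult_def sum_distrib_right)

lemma pauli_coeff_heisenberg_0: "pauli_coeff d n (heisenberg d n H Op 0) a = pauli_coeff d n Op a"
  unfolding pauli_coeff_eq by (intro sum.cong refl) (simp add: heisenberg_0)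

lemma pauli_coeff_heisenberg_has_vector_derivative:
  assumes "hermitian_op d n H"
  shows "((\<lambda>t. pauli_coeff d n (heisenberg d n H Op t) a) has_vector_derivative
           pauli_coeff d n (heisenberg_deriv d n H Op) a) (at 0)"
  unfolding pauli_coeff_eq
  by (intro has_vector_derivative_sum has_vector_derivative_mult_left
        heisenberg_has_vector_derivative[OF assms])

lemma has_real_derivative_cmod_power2:
  assumes "(c has_vector_derivative c') (at t)"
  shows "((\<lambda>t. (cmod (c t))\<^sup>2) has_real_derivative 2 * Re (cnj (c t) * c')) (at t)"
proof -
  have "((\<lambda>t. c t * cnj (c t)) has_vector_derivative c t * cnj c' + c' * cnj (c t)) (at t)"
    by (intro has_vector_derivative_mult has_vector_derivative_cnj assms)
  then have "((\<lambda>t. Re (c t * cnj (c t))) has_real_derivative Re (c t * cnj c' + c' * cnj (c t))) (at t)"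
    unfolding has_vector_derivative_complex_iff by blast
  moreover have "Re (c t * cnj c' + c' * cnj (c t)) = 2 * Re (cnj (c t) * c')"
    by (simp add: algebra_simps)
  ultimately show ?thesis
    by (simp add: complex_norm_square[symmetric] mult.commute)
qed

lemma influence_rate_eq:
  assumes "hermitian_op d n H"
  shows "influence_rate d n H Op = (\<Sum>a\<in>pauli_idx d n. real (pweight n a) *
           (2 * Re (cnj (pauli_coeff d n Op a) * pauli_coeff d n (heisenberg_deriv d n H Op) a)
            / real d ^ (2 * n)))"
proof -
  have "((\<lambda>t. (cmod (pauli_coeff d n (heisenberg d n H Op t) a))\<^sup>2) has_real_derivative
      2 * Re (cnj (pauli_coeff d n Op a) * pauli_coeff d n (heisenberg_deriv d n H Op) a)) (at 0)" for a
    using has_real_derivative_cmod_power2[OF pauli_coeff_heisenberg_has_vector_derivative[OF assms]]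
    unfolding pauli_coeff_heisenberg_0 .
  then show ?thesis
    unfolding influence_rate_def influence_def pauli_weight_dist_def pauli_coeff_def[symmetric]
    by (intro DERIV_imp_deriv DERIV_sum DERIV_cmult DERIV_cdivide)
qed

section \<open>Orthogonality of the Weyl operators\<close>

lemma sum_cis_orthogonal:
  assumes "u < d" "u' < d"
  shows "(\<Sum>t<d. cnj (cis (2 * pi * real t * real u / real d)) * cis (2 * pi * real t * real u' / real d))
         = (if u = u' then of_nat d else 0)"
proof (cases "u = u'")
  case True
  then show ?thesis by (simp add: cis_cnj cis_mult)
next
  case False
  define \<zeta> where "\<zeta> k = cis (2 * pi * real k / real d)" for k
  define \<omega> where "\<omega> = cnj (\<zeta> u) * \<zeta> u'"
  have "d > 0" using assms by simp
  have "\<zeta> u \<noteq> \<zeta> u'"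
    using Complex.bij_betw_roots_unity[OF \<open>d > 0\<close>] False assms unfolding bij_betw_def inj_on_def \<zeta>_def by auto
  moreover have "\<zeta> u * \<omega> = \<zeta> u'"
    by (simp add: \<omega>_def \<zeta>_def cis_cnj cis_mult flip: mult.assoc)
  ultimately have "\<omega> \<noteq> 1"
    by auto
  have "\<zeta> k ^ d = 1" for k
  proof -
    have "\<zeta> k ^ d = cis (2 * pi) ^ k"
      using \<open>d > 0\<close> by (simp add: \<zeta>_def Complex.DeMoivre mult_ac)
    then show ?thesis
      by (simp add: complex_eq_iff)
  qed
  then have "\<omega> ^ d = 1"
    by (simp add: \<omega>_def power_mult_distrib flip: complex_cnj_power)
  have "cnj (cis (2 * pi * real t * real u / real d)) * cis (2 * pi * real t * real u' / real d) = \<omega> ^ t" for t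
    by (simp add: \<omega>_def \<zeta>_def Complex.DeMoivre power_mult_distrib mult_ac flip: complex_cnj_power)
  then show ?thesis
    using \<open>\<omega> ^ d = 1\<close> \<open>\<omega> \<noteq> 1\<close> False by (simp add: geometric_sum)
qed

lemma mod_shift_solutions:
  fixes u v d :: nat
  assumes "u < d" "v < d"
  shows "{s. s < d \<and> (u + s) mod d = v} = {(v + d - u) mod d}"
proof -
  have "(u + (v + d - u) mod d) mod d = v"
  proof -
    have "(u + (v + d - u) mod d) mod d = (v + d) mod d"
      using assms by (simp add: mod_add_right_eq)
    then show ?thesis using assms by simp
  qed
  moreover have "s = (v + d - u) mod d" if "s < d" "(u + s) mod d = v" for s
  proof (cases "u + s < d")
    case True
    then have "v + d - u = s + d" using that by simp
    then show ?thesis using that by simp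
  next
    case False
    then have "v = u + s - d" using that assms by (simp add: le_mod_geq)
    then show ?thesis using that False by simp
  qed
  ultimately show ?thesis using assms by auto
qed

lemma sum_cnj_pauli1_mult:
  assumes "u < d" "v < d" "u' < d" "v' < d"
  shows "(\<Sum>b\<in>{..<d} \<times> {..<d}. cnj (pauli1 d b v u) * pauli1 d b v' u')
         = (if u = u' \<and> v = v' then of_nat d else 0)"
proof -
  have "(\<Sum>b\<in>{..<d} \<times> {..<d}. cnj (pauli1 d b v u) * pauli1 d b v' u')
     = (\<Sum>s<d. \<Sum>t<d. (if v = (u + s) mod d \<and> v' = (u' + s) mod d then 1 else 0) *
          (cnj (cis (2 * pi * real t * real u / real d)) * cis (2 * pi * real t * real u' / real d)))"
    unfolding sum.cartesian_product by (intro sum.cong refl) (auto simp: pauli1_def)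
  also have "\<dots> = (\<Sum>s<d. (if v = (u + s) mod d \<and> v' = (u' + s) mod d then 1 else 0) *
          (if u = u' then of_nat d else 0))"
    by (simp add: sum_distrib_left[symmetric] sum_cis_orthogonal assms)
  also have "\<dots> = (if u = u' then of_nat d * (\<Sum>s<d. if (u + s) mod d = v \<and> v' = v then 1 else 0) else 0)"
    by (auto simp: sum_distrib_left intro!: sum.cong)
  also have "\<dots> = (if u = u' \<and> v = v' then of_nat d else 0)"
  proof (cases "v' = v")
    case True
    have "(\<Sum>s<d. if (u + s) mod d = v then 1 else 0 :: complex) = of_nat (card {s. s < d \<and> (u + s) mod d = v})"
      by (simp add: sum.If_cases lessThan_def Collect_conj_eq Int_commute)
    also have "\<dots> = 1"
      using mod_shift_solutions[OF assms(1,2)] by simp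
    finally show ?thesis using True by auto
  qed auto
  finally show ?thesis .
qed

lemma pauli1_0_0: "pauli1 d (0, 0) 0 0 = 1"
  by (simp add: pauli1_def)

lemma sum_PiE_cnj_pauli_mult:
  assumes "\<And>i. finite (W i)"
  shows "(\<Sum>a\<in>PiE {..<n} W. cnj (pauli d n a z x) * pauli d n a z' x')
       = (\<Prod>i<n. \<Sum>b\<in>W i. cnj (pauli1 d b (z i) (x i)) * pauli1 d b (z' i) (x' i))"
  by (simp add: prod_sum_PiE assms pauli_def prod.distrib)

definition pauli_coeff_on :: "nat \<Rightarrow> nat \<Rightarrow> (nat \<Rightarrow> nat) set \<Rightarrow> qop \<Rightarrow> (nat \<Rightarrow> nat \<times> nat) \<Rightarrow> complex" where
  "pauli_coeff_on d n Y A a = (\<Sum>x\<in>Y. \<Sum>z\<in>Y. A x z * pauli d n a z x)"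

lemma pauli_parseval_general:
  assumes "finite Y" "finite P"
    and orth: "\<And>x z x' z'. x \<in> Y \<Longrightarrow> z \<in> Y \<Longrightarrow> x' \<in> Y \<Longrightarrow> z' \<in> Y \<Longrightarrow>
       (\<Sum>a\<in>P. cnj (pauli d n a z x) * pauli d n a z' x') = (if x' = x \<and> z' = z then \<kappa> else 0)"
  shows "(\<Sum>a\<in>P. cnj (pauli_coeff_on d n Y F a) * pauli_coeff_on d n Y G a)
       = \<kappa> * (\<Sum>x\<in>Y. \<Sum>z\<in>Y. cnj (F x z) * G x z)"
proof -
  have "cnj (pauli_coeff_on d n Y F a) * pauli_coeff_on d n Y G a
      = (\<Sum>x\<in>Y. \<Sum>z\<in>Y. \<Sum>x'\<in>Y. \<Sum>z'\<in>Y. cnj (F x z) * G x' z' * (cnj (pauli d n a z x) * pauli d n a z' x'))" for a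
  proof -
    have "cnj (pauli_coeff_on d n Y F a) * pauli_coeff_on d n Y G a
      = (\<Sum>x\<in>Y. \<Sum>x'\<in>Y. \<Sum>z\<in>Y. \<Sum>z'\<in>Y. cnj (F x z) * G x' z' * (cnj (pauli d n a z x) * pauli d n a z' x'))"
      by (simp add: pauli_coeff_on_def sum_distrib_left sum_distrib_right mult_ac)
    also have "\<dots> = (\<Sum>x\<in>Y. \<Sum>z\<in>Y. \<Sum>x'\<in>Y. \<Sum>z'\<in>Y. cnj (F x z) * G x' z' * (cnj (pauli d n a z x) * pauli d n a z' x'))"
      by (rule sum.cong[OF refl], rule sum.swap)
    finally show ?thesis .
  qed
  then have "(\<Sum>a\<in>P. cnj (pauli_coeff_on d n Y F a) * pauli_coeff_on d n Y G a)
      = (\<Sum>x\<in>Y. \<Sum>z\<in>Y. \<Sum>x'\<in>Y. \<Sum>z'\<in>Y. cnj (F x z) * G x' z' *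
           (\<Sum>a\<in>P. cnj (pauli d n a z x) * pauli d n a z' x'))"
    by (simp only: sum.swap[of _ P] sum_distrib_left)
  also have "\<dots> = (\<Sum>x\<in>Y. \<Sum>z\<in>Y. \<Sum>x'\<in>Y. \<Sum>z'\<in>Y. if x' = x \<and> z' = z then cnj (F x z) * G x z * \<kappa> else 0)"
    using orth by (intro sum.cong refl) auto
  also have "\<dots> = \<kappa> * (\<Sum>x\<in>Y. \<Sum>z\<in>Y. cnj (F x z) * G x z)"
  proof -
    have if_conj: "(if x' = x \<and> z' = z then c else 0) = (if z' = z then if x' = x then c else 0 else 0)"
      for x x' z z' and c :: complex
      by simp
    show ?thesis
      unfolding if_conj using assms(1) by (simp add: sum.delta' sum_distrib_left mult_ac cong: sum.cong)
  qed
  finally show ?thesis .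
qed

lemma prod_if_const:
  assumes "finite I"
  shows "(\<Prod>i\<in>I. if P i then (c::complex) else 0) = (if \<forall>i\<in>I. P i then c ^ card I else 0)"
  using assms by (auto simp: prod_constant intro: prod_zero)

lemma pauli_parseval:
  "(\<Sum>a\<in>pauli_idx d n. cnj (pauli_coeff d n F a) * pauli_coeff d n G a)
     = of_nat d ^ n * (\<Sum>x\<in>qbasis d n. \<Sum>z\<in>qbasis d n. cnj (F x z) * G x z)"
  unfolding pauli_coeff_eq pauli_coeff_on_def[symmetric]
proof (rule pauli_parseval_general)
  fix x z x' z' assume xz: "x \<in> qbasis d n" "z \<in> qbasis d n" "x' \<in> qbasis d n" "z' \<in> qbasis d n"
  have "(\<Sum>a\<in>pauli_idx d n. cnj (pauli d n a z x) * pauli d n a z' x')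
      = (\<Prod>i<n. if x i = x' i \<and> z i = z' i then of_nat d else 0)"
    unfolding pauli_idx_def sum_PiE_cnj_pauli_mult[OF finite_SigmaI[OF finite_lessThan finite_lessThan]]
    using xz by (intro prod.cong refl sum_cnj_pauli1_mult) (auto intro: qbasis_less)
  also have "\<dots> = (if x' = x \<and> z' = z then of_nat d ^ n else 0)"
    using xz by (auto simp: prod_if_const qbasis_eq_iff)
  finally show "(\<Sum>a\<in>pauli_idx d n. cnj (pauli d n a z x) * pauli d n a z' x')
      = (if x' = x \<and> z' = z then of_nat d ^ n else 0)" .
qed (simp_all add: pauli_idx_def finite_PiE)

lemma pauli_parseval_norm:
  "(\<Sum>a\<in>pauli_idx d n. (cmod (pauli_coeff d n A a))\<^sup>2)
     = real d ^ n * (\<Sum>x\<in>qbasis d n. \<Sum>z\<in>qbasis d n. (cmod (A x z))\<^sup>2)"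
proof -
  have "complex_of_real (\<Sum>a\<in>pauli_idx d n. (cmod (pauli_coeff d n A a))\<^sup>2)
      = complex_of_real (real d ^ n * (\<Sum>x\<in>qbasis d n. \<Sum>z\<in>qbasis d n. (cmod (A x z))\<^sup>2))"
    using pauli_parseval[of d n A A] by (simp add: cnj_mult_self)
  then show ?thesis
    by (simp only: of_real_eq_iff)
qed

section \<open>Partial trace over one qudit\<close>

text \<open>A basis state of the qudits other than \<open>j\<close> is represented by the state of all \<open>n\<close> qudits
  that has \<open>0\<close> in position \<open>j\<close>.\<close>

definition qbasis_site0 :: "nat \<Rightarrow> nat \<Rightarrow> nat \<Rightarrow> (nat \<Rightarrow> nat) set" where
  "qbasis_site0 d n j = {x \<in> qbasis d n. x j = 0}"

definition partial_trace_site :: "nat \<Rightarrow> nat \<Rightarrow> qop \<Rightarrow> qop" where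
  "partial_trace_site d j A = (\<lambda>x z. \<Sum>c<d. A (x(j := c)) (z(j := c)))"

lemma finite_qbasis_site0 [simp]: "finite (qbasis_site0 d n j)"
  by (simp add: qbasis_site0_def)

lemma qbasis_site0_eq_iff:
  assumes "x \<in> qbasis_site0 d n j" "y \<in> qbasis_site0 d n j"
  shows "x = y \<longleftrightarrow> (\<forall>i\<in>{..<n} - {j}. x i = y i)"
proof -
  have "x j = y j"
    using assms by (simp add: qbasis_site0_def)
  moreover have "x = y \<longleftrightarrow> (\<forall>i<n. x i = y i)"
    using assms qbasis_eq_iff by (auto simp: qbasis_site0_def)
  ultimately show ?thesis
    by (metis Diff_iff lessThan_iff singletonD)
qed

lemma sum_qbasis_split_site:
  assumes "j < n"
  shows "(\<Sum>x\<in>qbasis d n. f x) = (\<Sum>x\<in>qbasis_site0 d n j. \<Sum>c<d. f (x(j := c)))"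
proof -
  have "y(j := 0) \<in> qbasis d n" if "y \<in> qbasis d n" for y
    using fun_upd_in_qbasis[OF that assms] qbasis_less[OF that assms] by simp
  then have "bij_betw (\<lambda>(x, c). x(j := c)) (qbasis_site0 d n j \<times> {..<d}) (qbasis d n)"
    by (intro bij_betwI[where g="\<lambda>y. (y(j := 0), y j)"])
       (use assms in \<open>auto simp: qbasis_site0_def fun_upd_in_qbasis qbasis_less\<close>)
  then show ?thesis
    by (simp add: sum.cartesian_product sum.reindex_bij_betw[symmetric] split_def)
qed

lemma pauli_fun_upd_site:
  assumes "j < n" "a j = (0, 0)" "x j = 0" "z j = 0" "c < d" "c' < d"
  shows "pauli d n a (z(j := c')) (x(j := c)) = (if c' = c then pauli d n a z x else 0)"
proof -
  have "pauli d n a (z(j := c')) (x(j := c)) = pauli1 d (a j) c' c * (\<Prod>i\<in>{..<n} - {j}. pauli1 d (a i) (z i) (x i))"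
    and "pauli d n a z x = pauli1 d (a j) 0 0 * (\<Prod>i\<in>{..<n} - {j}. pauli1 d (a i) (z i) (x i))"
    using assms unfolding pauli_def by (simp_all add: prod.remove)
  then show ?thesis
    using assms by (simp add: pauli1_def)
qed

lemma pauli_coeff_eq_partial_trace_site:
  assumes "j < n" "a j = (0, 0)"
  shows "pauli_coeff d n A a = pauli_coeff_on d n (qbasis_site0 d n j) (partial_trace_site d j A) a"
proof -
  let ?X = "qbasis_site0 d n j"
  have "pauli_coeff d n A a = (\<Sum>x\<in>?X. \<Sum>c<d. \<Sum>z\<in>?X. \<Sum>c'<d.
           A (x(j := c)) (z(j := c')) * pauli d n a (z(j := c')) (x(j := c)))"
    unfolding pauli_coeff_eq sum_qbasis_split_site[OF assms(1)] ..
  also have "\<dots> = (\<Sum>x\<in>?X. \<Sum>c<d. \<Sum>z\<in>?X. A (x(j := c)) (z(j := c)) * pauli d n a z x)"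
    by (intro sum.cong refl)
       (simp add: qbasis_site0_def pauli_fun_upd_site[where a=a, OF assms] if_distrib[of "\<lambda>u. _ * u"] sum.delta' cong: if_cong)
  also have "\<dots> = pauli_coeff_on d n ?X (partial_trace_site d j A) a"
    unfolding pauli_coeff_on_def partial_trace_site_def sum_distrib_right
    by (intro sum.cong refl) (rule sum.swap)
  finally show ?thesis .
qed

lemma pauli_idx_site_identity:
  assumes "j < n" "0 < d"
  shows "{a \<in> pauli_idx d n. a j = (0, 0)} = PiE {..<n} (\<lambda>i. if i = j then {(0, 0)} else {..<d} \<times> {..<d})"
    (is "_ = PiE _ ?W")
proof (intro set_eqI iffI)
  fix a assume "a \<in> {a \<in> pauli_idx d n. a j = (0, 0)}"
  then show "a \<in> PiE {..<n} ?W"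
    unfolding pauli_idx_def by (simp add: PiE_iff)
next
  fix a assume a: "a \<in> PiE {..<n} ?W"
  then have "a j = (0, 0)"
    using PiE_mem[OF a, of j] assms(1) by simp
  moreover have "a i \<in> {..<d} \<times> {..<d}" if "i < n" for i
    using PiE_mem[OF a, of i] that \<open>a j = (0, 0)\<close> assms(2) by (cases "i = j") simp_all
  ultimately show "a \<in> {a \<in> pauli_idx d n. a j = (0, 0)}"
    using a by (simp add: pauli_idx_def PiE_iff)
qed

lemma pauli_parseval_site:
  assumes "j < n" "0 < d"
  shows "(\<Sum>a\<in>{a \<in> pauli_idx d n. a j = (0, 0)}. cnj (pauli_coeff d n F a) * pauli_coeff d n G a)
     = of_nat d ^ (n - 1) * (\<Sum>x\<in>qbasis_site0 d n j. \<Sum>z\<in>qbasis_site0 d n j.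
          cnj (partial_trace_site d j F x z) * partial_trace_site d j G x z)"
proof -
  let ?X = "qbasis_site0 d n j" and ?W = "\<lambda>i. if i = j then {(0, 0)} else {..<d} \<times> {..<d}"
  have "(\<Sum>a\<in>{a \<in> pauli_idx d n. a j = (0, 0)}. cnj (pauli_coeff d n F a) * pauli_coeff d n G a)
     = (\<Sum>a\<in>PiE {..<n} ?W. cnj (pauli_coeff_on d n ?X (partial_trace_site d j F) a)
                               * pauli_coeff_on d n ?X (partial_trace_site d j G) a)"
    unfolding pauli_idx_site_identity[OF assms, symmetric]
    by (intro sum.cong refl) (simp add: pauli_coeff_eq_partial_trace_site[OF assms(1)])
  also have "\<dots> = of_nat d ^ (n - 1) * (\<Sum>x\<in>?X. \<Sum>z\<in>?X.
          cnj (partial_trace_site d j F x z) * partial_trace_site d j G x z)"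
  proof (rule pauli_parseval_general)
    have finW: "finite (?W i)" for i
      by simp
    fix x z x' z' assume xz: "x \<in> ?X" "z \<in> ?X" "x' \<in> ?X" "z' \<in> ?X"
    then have "x i < d" "z i < d" "x' i < d" "z' i < d" if "i < n" for i
      using that by (auto simp: qbasis_site0_def qbasis_less)
    moreover have "x j = 0" "z j = 0" "x' j = 0" "z' j = 0"
      using xz by (auto simp: qbasis_site0_def)
    ultimately have "(\<Sum>a\<in>PiE {..<n} ?W. cnj (pauli d n a z x) * pauli d n a z' x')
        = (\<Prod>i<n. if i = j then 1 else if x i = x' i \<and> z i = z' i then of_nat d else 0)"
      unfolding sum_PiE_cnj_pauli_mult[of ?W, OF finW]
      by (intro prod.cong refl) (auto simp: sum_cnj_pauli1_mult pauli1_0_0)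
    also have "\<dots> = (\<Prod>i\<in>{..<n} - {j}. if x i = x' i \<and> z i = z' i then of_nat d else 0)"
      using assms(1) by (simp add: prod.remove)
    also have "\<dots> = (if x' = x \<and> z' = z then of_nat d ^ (n - 1) else 0)"
      using xz assms(1) by (auto simp: prod_if_const qbasis_site0_eq_iff)
    finally show "(\<Sum>a\<in>PiE {..<n} ?W. cnj (pauli d n a z x) * pauli d n a z' x')
        = (if x' = x \<and> z' = z then of_nat d ^ (n - 1) else 0)" .
  qed (simp_all add: finite_PiE)
  finally show ?thesis .
qed

lemma acts_on_fun_upd_site:
  assumes "acts_on d n S H" "j < n" "j \<notin> S" "x \<in> qbasis_site0 d n j" "w \<in> qbasis_site0 d n j" "c < d" "c' < d"
  shows "H (x(j := c)) (w(j := c')) = (if c = c' then H x w else 0)"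
proof -
  obtain h where h: "\<And>x y. x \<in> qbasis d n \<Longrightarrow> y \<in> qbasis d n \<Longrightarrow>
      H x y = h (restrict x S) (restrict y S) * (if \<forall>i\<in>{..<n} - S. x i = y i then 1 else 0)"
    using assms(1) unfolding acts_on_def by blast
  have xw: "x \<in> qbasis d n" "w \<in> qbasis d n" "x j = 0" "w j = 0"
    using assms(4,5) by (auto simp: qbasis_site0_def)
  have "restrict (x(j := c)) S = restrict x S" "restrict (w(j := c')) S = restrict w S"
    using assms(3) by (auto simp: restrict_def)
  moreover have "(\<forall>i\<in>{..<n} - S. (x(j := c)) i = (w(j := c')) i) \<longleftrightarrow> c = c' \<and> (\<forall>i\<in>{..<n} - S. x i = w i)"
      (is "?L \<longleftrightarrow> _")
  proof
    assume ?L
    then have "c = c'"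
      using assms(2,3) by (metis Diff_iff fun_upd_same lessThan_iff)
    moreover have "x i = w i" if "i \<in> {..<n} - S" for i
      using bspec[OF \<open>?L\<close> that] xw(3,4) by (cases "i = j") auto
    ultimately show "c = c' \<and> (\<forall>i\<in>{..<n} - S. x i = w i)"
      by blast
  qed auto
  ultimately show ?thesis
    using h[OF xw(1,2)] h[OF fun_upd_in_qbasis[OF xw(1) assms(2,6)] fun_upd_in_qbasis[OF xw(2) assms(2,7)]]
    by simp
qed

lemma partial_trace_site_qmult_left:
  assumes "acts_on d n S H" "j < n" "j \<notin> S" "x \<in> qbasis_site0 d n j" "y \<in> qbasis_site0 d n j"
  shows "partial_trace_site d j (qmult d n H A) x y = (\<Sum>w\<in>qbasis_site0 d n j. H x w * partial_trace_site d j A w y)"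
proof -
  let ?X = "qbasis_site0 d n j"
  have "partial_trace_site d j (qmult d n H A) x y
      = (\<Sum>c<d. \<Sum>w\<in>?X. \<Sum>c'<d. H (x(j := c)) (w(j := c')) * A (w(j := c')) (y(j := c)))"
    unfolding partial_trace_site_def qmult_def sum_qbasis_split_site[OF assms(2)] ..
  also have "\<dots> = (\<Sum>c<d. \<Sum>w\<in>?X. H x w * A (w(j := c)) (y(j := c)))"
    by (intro sum.cong refl)
       (simp add: acts_on_fun_upd_site[OF assms(1-4)] if_distrib[of "\<lambda>u. u * _"] sum.delta cong: if_cong)
  also have "\<dots> = (\<Sum>w\<in>?X. H x w * partial_trace_site d j A w y)"
    unfolding partial_trace_site_def sum_distrib_left by (rule sum.swap)
  finally show ?thesis .
qed

lemma partial_trace_site_qmult_right: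
  assumes "acts_on d n S H" "j < n" "j \<notin> S" "x \<in> qbasis_site0 d n j" "y \<in> qbasis_site0 d n j"
  shows "partial_trace_site d j (qmult d n A H) x y = (\<Sum>w\<in>qbasis_site0 d n j. partial_trace_site d j A x w * H w y)"
proof -
  let ?X = "qbasis_site0 d n j"
  have "partial_trace_site d j (qmult d n A H) x y
      = (\<Sum>c<d. \<Sum>w\<in>?X. \<Sum>c'<d. A (x(j := c)) (w(j := c')) * H (w(j := c')) (y(j := c)))"
    unfolding partial_trace_site_def qmult_def sum_qbasis_split_site[OF assms(2)] ..
  also have "\<dots> = (\<Sum>c<d. \<Sum>w\<in>?X. A (x(j := c)) (w(j := c)) * H w y)"
    by (intro sum.cong refl)
       (simp add: acts_on_fun_upd_site[OF assms(1-3) _ assms(5)] if_distrib[of "\<lambda>u. _ * u"] sum.delta' cong: if_cong)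
  also have "\<dots> = (\<Sum>w\<in>?X. partial_trace_site d j A x w * H w y)"
    unfolding partial_trace_site_def sum_distrib_right by (rule sum.swap)
  finally show ?thesis .
qed

section \<open>Qudits outside the support\<close>

lemma Im_hermitian_form_eq_0:
  assumes "\<And>a b. a \<in> Y \<Longrightarrow> b \<in> Y \<Longrightarrow> M a b = cnj (M b a)"
  shows "Im (\<Sum>a\<in>Y. \<Sum>b\<in>Y. cnj (v a) * M a b * v b) = 0"
proof -
  let ?Q = "\<Sum>a\<in>Y. \<Sum>b\<in>Y. cnj (v a) * M a b * v b"
  have "cnj (M a b) = M b a" if "a \<in> Y" "b \<in> Y" for a b
    using assms[OF that(2,1)] by simp
  then have "cnj ?Q = (\<Sum>a\<in>Y. \<Sum>b\<in>Y. v a * M b a * cnj (v b))"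
    by (simp cong: sum.cong)
  also have "\<dots> = ?Q"
    by (subst sum.swap) (simp add: mult_ac)
  finally have "cnj ?Q = ?Q" .
  moreover have "Im z = 0" if "cnj z = z" for z :: complex
    using that by (simp add: complex_eq_iff)
  ultimately show ?thesis
    by blast
qed

lemma Re_inner_commutator_eq_0:
  fixes F M :: "'a \<Rightarrow> 'a \<Rightarrow> complex"
  assumes "\<And>a b. a \<in> Y \<Longrightarrow> b \<in> Y \<Longrightarrow> M a b = cnj (M b a)"
  shows "Re (\<Sum>x\<in>Y. \<Sum>z\<in>Y. cnj (F x z) * (- \<i> * ((\<Sum>w\<in>Y. M x w * F w z) - (\<Sum>w\<in>Y. F x w * M w z)))) = 0"
proof -
  define L where "L = (\<Sum>z\<in>Y. \<Sum>x\<in>Y. \<Sum>w\<in>Y. cnj (F x z) * M x w * F w z)"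
  define R where "R = (\<Sum>x\<in>Y. \<Sum>w\<in>Y. \<Sum>z\<in>Y. cnj (cnj (F x w)) * M w z * cnj (F x z))"
  have "Im L = 0"
    unfolding L_def by (subst Im_sum, rule sum.neutral, rule ballI, rule Im_hermitian_form_eq_0[OF assms])
  moreover have "Im R = 0"
    unfolding R_def by (subst Im_sum, rule sum.neutral, rule ballI, rule Im_hermitian_form_eq_0[OF assms])
  moreover have "(\<Sum>x\<in>Y. \<Sum>z\<in>Y. cnj (F x z) * (- \<i> * ((\<Sum>w\<in>Y. M x w * F w z) - (\<Sum>w\<in>Y. F x w * M w z))))
      = - \<i> * (L - R)"
  proof -
    have "(\<Sum>x\<in>Y. \<Sum>z\<in>Y. cnj (F x z) * (\<Sum>w\<in>Y. M x w * F w z)) = L"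
      unfolding L_def by (subst sum.swap) (simp add: sum_distrib_left mult_ac)
    moreover have "(\<Sum>x\<in>Y. \<Sum>z\<in>Y. cnj (F x z) * (\<Sum>w\<in>Y. F x w * M w z)) = R"
    proof -
      have "(\<Sum>x\<in>Y. \<Sum>z\<in>Y. cnj (F x z) * (\<Sum>w\<in>Y. F x w * M w z))
          = (\<Sum>x\<in>Y. \<Sum>z\<in>Y. \<Sum>w\<in>Y. cnj (F x z) * F x w * M w z)"
        by (simp add: sum_distrib_left mult_ac)
      also have "\<dots> = R"
        unfolding R_def by (rule sum.cong[OF refl], subst sum.swap) (simp add: mult_ac)
      finally show ?thesis .
    qed
    moreover have "cnj f * (- \<i> * (u - v)) = - \<i> * (cnj f * u) - - \<i> * (cnj f * v)" for f u v :: complex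
      by (simp add: algebra_simps)
    ultimately show ?thesis
      by (simp only: sum_subtractf right_diff_distrib flip: sum_distrib_left)
  qed
  ultimately show ?thesis
    by simp
qed

lemma Re_sum_pauli_coeff_heisenberg_deriv_eq_0:
  assumes "hermitian_op d n H"
  shows "Re (\<Sum>a\<in>pauli_idx d n. cnj (pauli_coeff d n Op a) * pauli_coeff d n (heisenberg_deriv d n H Op) a) = 0"
proof -
  have "H a b = cnj (H b a)" if "a \<in> qbasis d n" "b \<in> qbasis d n" for a b
    using assms that unfolding hermitian_op_def by blast
  from Re_inner_commutator_eq_0[of "qbasis d n" H Op, OF this] show ?thesis
    unfolding pauli_parseval heisenberg_deriv_def qmult_def by simp
qed

lemma partial_trace_site_heisenberg_deriv:
  assumes "acts_on d n S H" "j < n" "j \<notin> S" "x \<in> qbasis_site0 d n j" "z \<in> qbasis_site0 d n j"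
  shows "partial_trace_site d j (heisenberg_deriv d n H Op) x z
    = - \<i> * ((\<Sum>w\<in>qbasis_site0 d n j. H x w * partial_trace_site d j Op w z)
              - (\<Sum>w\<in>qbasis_site0 d n j. partial_trace_site d j Op x w * H w z))"
proof -
  have "partial_trace_site d j (heisenberg_deriv d n H Op) x z
      = - \<i> * (partial_trace_site d j (qmult d n H Op) x z - partial_trace_site d j (qmult d n Op H) x z)"
    unfolding partial_trace_site_def heisenberg_deriv_def
    by (simp only: right_diff_distrib sum_subtractf flip: sum_distrib_left)
  then show ?thesis
    by (simp add: partial_trace_site_qmult_left[OF assms] partial_trace_site_qmult_right[OF assms])
qed

lemma Re_sum_site_identity_heisenberg_deriv_eq_0:
  assumes "hermitian_op d n H" "acts_on d n S H" "j < n" "j \<notin> S" "0 < d"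
  shows "Re (\<Sum>a\<in>{a \<in> pauli_idx d n. a j = (0, 0)}.
            cnj (pauli_coeff d n Op a) * pauli_coeff d n (heisenberg_deriv d n H Op) a) = 0"
proof -
  let ?X = "qbasis_site0 d n j" and ?O = "partial_trace_site d j Op"
  have herm: "H a b = cnj (H b a)" if "a \<in> ?X" "b \<in> ?X" for a b
    using assms(1) that unfolding hermitian_op_def qbasis_site0_def by blast
  have "(\<Sum>x\<in>?X. \<Sum>z\<in>?X. cnj (?O x z) * partial_trace_site d j (heisenberg_deriv d n H Op) x z)
      = (\<Sum>x\<in>?X. \<Sum>z\<in>?X. cnj (?O x z) *
           (- \<i> * ((\<Sum>w\<in>?X. H x w * ?O w z) - (\<Sum>w\<in>?X. ?O x w * H w z))))"
    using partial_trace_site_heisenberg_deriv[OF assms(2-4)] by (intro sum.cong refl) simp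
  then show ?thesis
    using Re_inner_commutator_eq_0[of ?X H ?O, OF herm] by (simp add: pauli_parseval_site[OF assms(3,5)])
qed

section \<open>Norm bounds\<close>

lemma op_norm_bdd_above:
  "bdd_above {sqrt (\<Sum>x\<in>qbasis d n. (cmod (\<Sum>y\<in>qbasis d n. A x y * v y))\<^sup>2) | v.
      (\<Sum>y\<in>qbasis d n. (cmod (v y))\<^sup>2) = 1}"
proof (rule bdd_aboveI, clarify)
  let ?B = "qbasis d n"
  fix v :: "(nat \<Rightarrow> nat) \<Rightarrow> complex" assume v: "(\<Sum>y\<in>?B. (cmod (v y))\<^sup>2) = 1"
  have "cmod (v y) \<le> 1" if "y \<in> ?B" for y
  proof -
    have "(cmod (v y))\<^sup>2 \<le> 1"
      using v that member_le_sum[of y ?B "\<lambda>y. (cmod (v y))\<^sup>2"] by simp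
    then show ?thesis
      by (simp add: power_le_one_iff abs_le_square_iff)
  qed
  then have "cmod (\<Sum>y\<in>?B. A x y * v y) \<le> (\<Sum>y\<in>?B. cmod (A x y))" for x
    by (intro order_trans[OF norm_sum] sum_mono) (simp add: norm_mult mult_left_le)
  then have "(\<Sum>x\<in>?B. (cmod (\<Sum>y\<in>?B. A x y * v y))\<^sup>2) \<le> (\<Sum>x\<in>?B. (\<Sum>y\<in>?B. cmod (A x y))\<^sup>2)"
    by (intro sum_mono power_mono) auto
  then show "sqrt (\<Sum>x\<in>?B. (cmod (\<Sum>y\<in>?B. A x y * v y))\<^sup>2) \<le> sqrt (\<Sum>x\<in>?B. (\<Sum>y\<in>?B. cmod (A x y))\<^sup>2)"
    by (rule real_sqrt_le_mono)
qed

lemma op_norm_ge_unit: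
  assumes "(\<Sum>y\<in>qbasis d n. (cmod (v y))\<^sup>2) = 1"
  shows "sqrt (\<Sum>x\<in>qbasis d n. (cmod (\<Sum>y\<in>qbasis d n. A x y * v y))\<^sup>2) \<le> op_norm d n A"
  unfolding op_norm_def by (rule cSup_upper[OF _ op_norm_bdd_above]) (use assms in blast)

lemma op_norm_nonneg:
  assumes "0 < d"
  shows "0 \<le> op_norm d n A"
proof -
  obtain y0 where y0: "y0 \<in> qbasis d n"
    using qbasis_nonempty[OF assms] by blast
  then have "(\<Sum>y\<in>qbasis d n. (cmod (if y = y0 then 1 else 0))\<^sup>2) = 1"
    by (simp add: if_distrib[of "\<lambda>u. (cmod u)\<^sup>2"] cong: if_cong)
  then have "sqrt (\<Sum>x\<in>qbasis d n. (cmod (\<Sum>y\<in>qbasis d n. A x y * (if y = y0 then 1 else 0)))\<^sup>2)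
      \<le> op_norm d n A"
    by (rule op_norm_ge_unit)
  then show ?thesis
    by (rule order_trans[rotated]) (simp add: sum_nonneg)
qed

lemma sum_cmod_qapply_le_op_norm:
  "(\<Sum>x\<in>qbasis d n. (cmod (\<Sum>y\<in>qbasis d n. A x y * v y))\<^sup>2)
     \<le> (op_norm d n A)\<^sup>2 * (\<Sum>y\<in>qbasis d n. (cmod (v y))\<^sup>2)"
proof -
  let ?B = "qbasis d n" and ?N = "\<Sum>y\<in>qbasis d n. (cmod (v y))\<^sup>2"
  consider "?N = 0" | "?N > 0"
    by (metis (no_types, lifting) sum_nonneg zero_le_power2 order_le_less)
  then show ?thesis
  proof cases
    case 1
    then have "\<forall>y\<in>?B. v y = 0"
      by (simp add: sum_nonneg_eq_0_iff)
    then show ?thesis by simp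
  next
    case 2
    define s where "s = sqrt ?N"
    have "s > 0" "s\<^sup>2 = ?N"
      using 2 by (simp_all add: s_def)
    define u where "u y = v y / complex_of_real s" for y
    have "(\<Sum>y\<in>?B. (cmod (u y))\<^sup>2) = 1"
      using \<open>s > 0\<close> \<open>s\<^sup>2 = ?N\<close> 2
      by (simp add: u_def norm_divide power_divide flip: sum_divide_distrib)
    have u_apply: "(\<Sum>y\<in>?B. A x y * u y) = (\<Sum>y\<in>?B. A x y * v y) / complex_of_real s" for x
      unfolding u_def by (simp add: sum_divide_distrib)
    have cmod_div: "(cmod (z / complex_of_real s))\<^sup>2 = (cmod z)\<^sup>2 / s\<^sup>2" for z
      using \<open>s > 0\<close> by (simp add: norm_divide power_divide)
    have "(\<Sum>x\<in>?B. (cmod (\<Sum>y\<in>?B. A x y * u y))\<^sup>2)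
        = (\<Sum>x\<in>?B. (cmod (\<Sum>y\<in>?B. A x y * v y))\<^sup>2) / s\<^sup>2"
      unfolding u_apply cmod_div by (simp add: sum_divide_distrib)
    with sqrt_le_D[OF op_norm_ge_unit[OF \<open>(\<Sum>y\<in>?B. (cmod (u y))\<^sup>2) = 1\<close>, of A]]
    have "(\<Sum>x\<in>?B. (cmod (\<Sum>y\<in>?B. A x y * v y))\<^sup>2) / s\<^sup>2 \<le> (op_norm d n A)\<^sup>2"
      by simp
    then show ?thesis
      using \<open>s\<^sup>2 = ?N\<close> 2 by (simp add: pos_divide_le_eq)
  qed
qed

lemma hs_norm_eq_1_iff_sum:
  assumes "0 < d"
  shows "hs_norm d n A = 1 \<longleftrightarrow> (\<Sum>x\<in>qbasis d n. \<Sum>z\<in>qbasis d n. (cmod (A x z))\<^sup>2) = real d ^ n"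
proof -
  have "Re (qtrace d n (qmult d n (qadj A) A)) = (\<Sum>z\<in>qbasis d n. \<Sum>x\<in>qbasis d n. (cmod (A x z))\<^sup>2)"
    by (simp add: qtrace_def qmult_def qadj_def Re_sum cnj_mult_self)
  also have "\<dots> = (\<Sum>x\<in>qbasis d n. \<Sum>z\<in>qbasis d n. (cmod (A x z))\<^sup>2)"
    by (rule sum.swap)
  finally have "Re (qtrace d n (qmult d n (qadj A) A)) = (\<Sum>x\<in>qbasis d n. \<Sum>z\<in>qbasis d n. (cmod (A x z))\<^sup>2)" .
  moreover have "sqrt (s / real d ^ n) = 1 \<longleftrightarrow> s = real d ^ n" for s
    using assms by auto
  ultimately show ?thesis
    unfolding hs_norm_def by presburger
qed

lemma sum_cmod_qmult_left_le:
  "(\<Sum>x\<in>qbasis d n. \<Sum>z\<in>qbasis d n. (cmod (qmult d n H A x z))\<^sup>2)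
     \<le> (op_norm d n H)\<^sup>2 * (\<Sum>x\<in>qbasis d n. \<Sum>z\<in>qbasis d n. (cmod (A x z))\<^sup>2)"
proof -
  let ?B = "qbasis d n"
  have "(\<Sum>x\<in>?B. \<Sum>z\<in>?B. (cmod (qmult d n H A x z))\<^sup>2) = (\<Sum>z\<in>?B. \<Sum>x\<in>?B. (cmod (\<Sum>w\<in>?B. H x w * A w z))\<^sup>2)"
    unfolding qmult_def by (rule sum.swap)
  also have "\<dots> \<le> (\<Sum>z\<in>?B. (op_norm d n H)\<^sup>2 * (\<Sum>w\<in>?B. (cmod (A w z))\<^sup>2))"
    by (intro sum_mono sum_cmod_qapply_le_op_norm)
  also have "\<dots> = (op_norm d n H)\<^sup>2 * (\<Sum>x\<in>?B. \<Sum>z\<in>?B. (cmod (A x z))\<^sup>2)"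
    unfolding sum_distrib_left by (rule sum.swap)
  finally show ?thesis .
qed

lemma sum_cmod_qmult_right_le:
  assumes "hermitian_op d n H"
  shows "(\<Sum>x\<in>qbasis d n. \<Sum>z\<in>qbasis d n. (cmod (qmult d n A H x z))\<^sup>2)
     \<le> (op_norm d n H)\<^sup>2 * (\<Sum>x\<in>qbasis d n. \<Sum>z\<in>qbasis d n. (cmod (A x z))\<^sup>2)"
proof -
  let ?B = "qbasis d n"
  have "qmult d n A H x z = cnj (\<Sum>w\<in>?B. H z w * cnj (A x w))" if "z \<in> ?B" for x z
    unfolding qmult_def cnj_sum
  proof (rule sum.cong[OF refl])
    fix w assume "w \<in> ?B"
    then have "H w z = cnj (H z w)"
      using assms that unfolding hermitian_op_def by blast
    then show "A x w * H w z = cnj (H z w * cnj (A x w))"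
      by simp
  qed
  then have "(\<Sum>x\<in>?B. \<Sum>z\<in>?B. (cmod (qmult d n A H x z))\<^sup>2)
      = (\<Sum>x\<in>?B. \<Sum>z\<in>?B. (cmod (\<Sum>w\<in>?B. H z w * cnj (A x w)))\<^sup>2)"
    by (intro sum.cong refl) (simp only: complex_mod_cnj)
  also have "\<dots> \<le> (\<Sum>x\<in>?B. (op_norm d n H)\<^sup>2 * (\<Sum>w\<in>?B. (cmod (cnj (A x w)))\<^sup>2))"
    by (intro sum_mono sum_cmod_qapply_le_op_norm)
  also have "\<dots> = (op_norm d n H)\<^sup>2 * (\<Sum>x\<in>?B. \<Sum>z\<in>?B. (cmod (A x z))\<^sup>2)"
    by (simp add: sum_distrib_left)
  finally show ?thesis .
qed

lemma sqrt_sum_cmod_pauli_coeff_le: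
  assumes "(\<Sum>x\<in>qbasis d n. \<Sum>z\<in>qbasis d n. (cmod (A x z))\<^sup>2) \<le> C\<^sup>2 * real d ^ n" "0 \<le> C"
  shows "sqrt (\<Sum>a\<in>pauli_idx d n. (cmod (pauli_coeff d n A a))\<^sup>2) \<le> real d ^ n * C"
proof -
  have "(\<Sum>a\<in>pauli_idx d n. (cmod (pauli_coeff d n A a))\<^sup>2) \<le> (real d ^ n * C)\<^sup>2"
    unfolding pauli_parseval_norm using mult_left_mono[OF assms(1), of "real d ^ n"]
    by (simp add: power2_eq_square mult_ac)
  then show ?thesis
    using assms(2) by (simp add: real_le_lsqrt)
qed

lemma sum_cmod_mult_le:
  assumes "sqrt (\<Sum>a\<in>A. (cmod (f a))\<^sup>2) \<le> F" "sqrt (\<Sum>a\<in>A. (cmod (g a))\<^sup>2) \<le> G"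
  shows "(\<Sum>a\<in>A. cmod (f a) * cmod (g a)) \<le> F * G"
proof -
  have "(\<Sum>a\<in>A. cmod (f a) * cmod (g a)) \<le> sqrt (\<Sum>a\<in>A. (cmod (f a))\<^sup>2) * sqrt (\<Sum>a\<in>A. (cmod (g a))\<^sup>2)"
    using L2_set_mult_ineq[of "\<lambda>a. cmod (f a)" "\<lambda>a. cmod (g a)" A] by (simp add: L2_set_def)
  also have "\<dots> \<le> F * G"
  proof -
    have "0 \<le> sqrt (\<Sum>a\<in>A. (cmod (f a))\<^sup>2)" "0 \<le> sqrt (\<Sum>a\<in>A. (cmod (g a))\<^sup>2)"
      by (simp_all add: sum_nonneg)
    then show ?thesis
      using assms by (intro mult_mono')
  qed
  finally show ?thesis .
qed

lemma pauli_coeff_heisenberg_deriv: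
  "pauli_coeff d n (heisenberg_deriv d n H Op) a
     = - \<i> * (pauli_coeff d n (qmult d n H Op) a - pauli_coeff d n (qmult d n Op H) a)"
  unfolding pauli_coeff_eq heisenberg_deriv_def
  by (simp only: right_diff_distrib left_diff_distrib mult.assoc sum_subtractf flip: sum_distrib_left)

lemma sum_abs_Re_pauli_coeff_heisenberg_deriv_le:
  assumes "0 < d" "hermitian_op d n H" "hs_norm d n Op = 1"
  shows "(\<Sum>a\<in>pauli_idx d n. \<bar>2 * Re (cnj (pauli_coeff d n Op a) * pauli_coeff d n (heisenberg_deriv d n H Op) a)\<bar>)
     \<le> 4 * real d ^ (2 * n) * op_norm d n H"
proof -
  let ?P = "pauli_idx d n" and ?c = "\<lambda>a. cmod (pauli_coeff d n Op a)"
    and ?h = "\<lambda>a. cmod (pauli_coeff d n (qmult d n H Op) a)"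
    and ?o = "\<lambda>a. cmod (pauli_coeff d n (qmult d n Op H) a)"
  define N where "N = real d ^ n"
  have Op_sum: "(\<Sum>x\<in>qbasis d n. \<Sum>z\<in>qbasis d n. (cmod (Op x z))\<^sup>2) = N"
    using assms(1,3) hs_norm_eq_1_iff_sum by (simp add: N_def)
  have c_le: "sqrt (\<Sum>a\<in>?P. (?c a)\<^sup>2) \<le> N"
    unfolding pauli_parseval_norm Op_sum by (simp add: N_def)
  have "sqrt (\<Sum>a\<in>?P. (?h a)\<^sup>2) \<le> N * op_norm d n H"
    using sum_cmod_qmult_left_le[of d n H Op] op_norm_nonneg[OF assms(1)]
    unfolding Op_sum N_def by (rule sqrt_sum_cmod_pauli_coeff_le)
  with c_le have ch_le: "(\<Sum>a\<in>?P. ?c a * ?h a) \<le> N * (N * op_norm d n H)"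
    by (rule sum_cmod_mult_le)
  have "sqrt (\<Sum>a\<in>?P. (?o a)\<^sup>2) \<le> N * op_norm d n H"
    using sum_cmod_qmult_right_le[OF assms(2), of Op] op_norm_nonneg[OF assms(1)]
    unfolding Op_sum N_def by (rule sqrt_sum_cmod_pauli_coeff_le)
  with c_le have co_le: "(\<Sum>a\<in>?P. ?c a * ?o a) \<le> N * (N * op_norm d n H)"
    by (rule sum_cmod_mult_le)
  have term_le: "\<bar>2 * Re (cnj (pauli_coeff d n Op a) * pauli_coeff d n (heisenberg_deriv d n H Op) a)\<bar>
      \<le> 2 * (?c a * ?h a) + 2 * (?c a * ?o a)" for a
  proof -
    have "\<bar>Re (cnj (pauli_coeff d n Op a) * pauli_coeff d n (heisenberg_deriv d n H Op) a)\<bar>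
        \<le> cmod (cnj (pauli_coeff d n Op a) * pauli_coeff d n (heisenberg_deriv d n H Op) a)"
      by (rule abs_Re_le_cmod)
    also have "\<dots> = ?c a * cmod (pauli_coeff d n (qmult d n H Op) a - pauli_coeff d n (qmult d n Op H) a)"
      by (simp add: pauli_coeff_heisenberg_deriv norm_mult)
    also have "\<dots> \<le> ?c a * (?h a + ?o a)"
      by (intro mult_left_mono norm_triangle_ineq4) auto
    finally show ?thesis
      by (simp add: algebra_simps)
  qed
  have "(\<Sum>a\<in>?P. \<bar>2 * Re (cnj (pauli_coeff d n Op a) * pauli_coeff d n (heisenberg_deriv d n H Op) a)\<bar>)
      \<le> (\<Sum>a\<in>?P. 2 * (?c a * ?h a) + 2 * (?c a * ?o a))"
    by (rule sum_mono) (rule term_le)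
  also have "\<dots> = 2 * (\<Sum>a\<in>?P. ?c a * ?h a) + 2 * (\<Sum>a\<in>?P. ?c a * ?o a)"
    by (simp add: sum.distrib sum_distrib_left)
  also have "\<dots> \<le> 4 * (N * N) * op_norm d n H"
    using ch_le co_le by (simp add: algebra_simps)
  also have "N * N = real d ^ (2 * n)"
    by (simp add: N_def mult_2 power_add)
  finally show ?thesis .
qed

section \<open>The influence rate as a sum over qudits\<close>

definition site_rate :: "nat \<Rightarrow> nat \<Rightarrow> qop \<Rightarrow> qop \<Rightarrow> nat \<Rightarrow> real" where
  "site_rate d n H Op j = (\<Sum>a\<in>{a \<in> pauli_idx d n. a j \<noteq> (0, 0)}.
     2 * Re (cnj (pauli_coeff d n Op a) * pauli_coeff d n (heisenberg_deriv d n H Op) a)) / real d ^ (2 * n)"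

lemma pweight_eq_sum: "real (pweight n a) = (\<Sum>j<n. if a j \<noteq> (0, 0) then 1 else 0)"
  unfolding pweight_def by (simp add: sum.If_cases Int_def)

lemma influence_rate_eq_sum_site_rate:
  assumes "hermitian_op d n H"
  shows "influence_rate d n H Op = (\<Sum>j<n. site_rate d n H Op j)"
proof -
  define g where "g a = 2 * Re (cnj (pauli_coeff d n Op a) * pauli_coeff d n (heisenberg_deriv d n H Op) a)
    / real d ^ (2 * n)" for a
  have "influence_rate d n H Op = (\<Sum>a\<in>pauli_idx d n. \<Sum>j<n. if a j \<noteq> (0, 0) then g a else 0)"
    unfolding influence_rate_eq[OF assms] g_def[symmetric] pweight_eq_sum sum_distrib_right
    by (simp only: if_distrib[of "\<lambda>u. u * _"] mult_1_left mult_zero_left)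
  also have "\<dots> = (\<Sum>j<n. \<Sum>a\<in>{a \<in> pauli_idx d n. a j \<noteq> (0, 0)}. g a)"
    by (subst sum.swap) (simp add: sum.inter_filter pauli_idx_def finite_PiE)
  also have "\<dots> = (\<Sum>j<n. site_rate d n H Op j)"
    unfolding site_rate_def g_def by (simp add: sum_divide_distrib)
  finally show ?thesis .
qed

lemma site_rate_eq_0:
  assumes "hermitian_op d n H" "acts_on d n S H" "j < n" "j \<notin> S" "0 < d"
  shows "site_rate d n H Op j = 0"
proof -
  define g where "g a = cnj (pauli_coeff d n Op a) * pauli_coeff d n (heisenberg_deriv d n H Op) a" for a
  let ?P = "pauli_idx d n"
  have "finite ?P"
    by (simp add: pauli_idx_def finite_PiE)
  then have "(\<Sum>a\<in>{a \<in> ?P. a j \<noteq> (0, 0)}. g a) = (\<Sum>a\<in>?P. g a) - (\<Sum>a\<in>{a \<in> ?P. a j = (0, 0)}. g a)"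
    by (subst sum_diff[symmetric]) (auto intro: sum.cong)
  moreover have "Re (\<Sum>a\<in>?P. g a) = 0"
    unfolding g_def by (rule Re_sum_pauli_coeff_heisenberg_deriv_eq_0[OF assms(1)])
  moreover have "Re (\<Sum>a\<in>{a \<in> ?P. a j = (0, 0)}. g a) = 0"
    unfolding g_def by (rule Re_sum_site_identity_heisenberg_deriv_eq_0[OF assms])
  moreover have "site_rate d n H Op j = 2 * Re (\<Sum>a\<in>{a \<in> ?P. a j \<noteq> (0, 0)}. g a) / real d ^ (2 * n)"
    unfolding site_rate_def g_def[symmetric] by (simp only: Re_sum sum_distrib_left)
  ultimately show ?thesis
    by simp
qed

lemma abs_site_rate_le:
  assumes "0 < d" "hermitian_op d n H" "hs_norm d n Op = 1"
  shows "\<bar>site_rate d n H Op j\<bar> \<le> 4 * op_norm d n H"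
proof -
  let ?g = "\<lambda>a. 2 * Re (cnj (pauli_coeff d n Op a) * pauli_coeff d n (heisenberg_deriv d n H Op) a)"
  have "\<bar>\<Sum>a\<in>{a \<in> pauli_idx d n. a j \<noteq> (0, 0)}. ?g a\<bar> \<le> (\<Sum>a\<in>pauli_idx d n. \<bar>?g a\<bar>)"
    by (rule order_trans[OF sum_abs sum_mono2]) (auto simp: pauli_idx_def finite_PiE)
  also have "\<dots> \<le> 4 * real d ^ (2 * n) * op_norm d n H"
    by (rule sum_abs_Re_pauli_coeff_heisenberg_deriv_le[OF assms])
  finally show ?thesis
    using assms(1) by (simp add: site_rate_def pos_divide_le_eq mult_ac)
qed

theorem mainTheorem6:
  fixes d n k :: nat and S :: "nat set" and H Op :: qop
  assumes "d \<ge> 2" and "n \<ge> 1"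
    and "hermitian_op d n H"
    and "S \<subseteq> {..<n}" and "card S = k" and "acts_on d n S H"
    and "hs_norm d n Op = 1"
  shows "\<bar>influence_rate d n H Op\<bar> \<le> 4 * real k * op_norm d n H"
proof -
  have "0 < d"
    using assms(1) by simp
  have "influence_rate d n H Op = (\<Sum>j\<in>S. site_rate d n H Op j)"
    unfolding influence_rate_eq_sum_site_rate[OF assms(3)]
    by (rule sum.mono_neutral_right) (use assms(4) site_rate_eq_0[OF assms(3,6) _ _ \<open>0 < d\<close>] in auto)
  also have "\<bar>\<dots>\<bar> \<le> (\<Sum>j\<in>S. 4 * op_norm d n H)"
    by (rule order_trans[OF sum_abs sum_mono]) (rule abs_site_rate_le[OF \<open>0 < d\<close> assms(3,7)])
  also have "\<dots> = 4 * real k * op_norm d n H"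
    using assms(5) by simp
  finally show ?thesis .
qed

end
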